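(* Consider the P-SSD algorithm described in the context, executed over a time-invariant digraph $G$ (i.e., $G_k=G$ for all $k$). Then for any $l\in\mathbb{N}$: $\mathrm{flag}_l^i=1$ for every $i\in\{1,\dots,M\}$ if and only if $C_k^i=C_{l-1}^i$ and $\mathrm{flag}_k^i=1$ for every $i\in\{1,\dots,M\}$ and every $k\ge l$.
   Context: Data setting: a map $T:\mathcal{M}\to\mathcal{M}$, $\mathcal{M}\subseteq\mathbb{R}^n$; a dictionary $D(x)=[d_1(x),\dots,d_{N_d}(x)]$ of real-valued functions on $\mathcal{M}$; data matrices $X,Y\in\mathbb{R}^{N\times n}$ whose $i$-th rows $x_i^T,y_i^T$ satisfy $y_i=T(x_i)$; $D(X)\in\mathbb{R}^{N\times N_d}$ is the matrix with rows $D(x_1),\dots,D(x_N)$ (similarly $D(Y)$). Assumption: $D(X)$ and $D(Y)$ have full column rank. There are $M$ agents; agent $i$ holds local dictionary snapshots $D(X_i),D(Y_i)$ (obtained from a subset of the snapshot pairs) such that the union over $i$ of the rows of $[D(X_i),D(Y_i)]$ equals the set of rows of $[D(X),D(Y)]$. There are signature matrices $D(X_s),D(Y_s)$ with full column rank such that the rows of $[D(X_s),D(Y_s)]$ are contained in the rows of $[D(X_i),D(Y_i)]$ for every $i$. SSD algorithm: given $A,B\in\mathbb{R}^{m\times q}$, set $A_1=A$, $B_1=B$, $C=I_q$, and iterate: let $[Z^A_j;Z^B_j]$ be a matrix whose columns form a basis of the null space of $[A_j,B_j]$ (with $Z^A_j$ having as many rows as $A_j$ has columns); if the null space is trivial return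 $0$; if the number of rows of $Z^A_j$ is at most its number of columns, return $C$; otherwise set $C\leftarrow CZ^A_j$, $A_{j+1}=A_jZ^A_j$, $B_{j+1}=B_jZ^A_j$. Its output is denoted $\mathrm{SSD}(A,B)$. P-SSD algorithm: at iteration $k\ge1$ the digraph $G_k$ is used; an edge $(j,i)\in E_k$ means $j$ is an in-neighbor of $i$, and $\mathcal{N}_{\mathrm{in}}^k(i)$ denotes the in-neighbors of $i$ in $G_k$. Each agent $i$ sets $C_0^i=I_{N_d}$, $\mathrm{flag}_0^i=0$, and for $k=1,2,\dots$: receives $C_{k-1}^j$ for $j\in\mathcal{N}_{\mathrm{in}}^k(i)$; sets $D_k^i=\mathrm{basis}\big(\bigcap_{j\in\{i\}\cup\mathcal{N}_{\mathrm{in}}^k(i)}\mathcal{R}(C_{k-1}^j)\big)$; sets $E_k^i=\mathrm{SSD}(D(X_i)D_k^i,D(Y_i)D_k^i)$; if the number of columns of $D_k^iE_k^i$ is strictly less than that of $C_{k-1}^i$, sets $C_k^i=D_k^iE_k^i$ and $\mathrm{flag}_k^i=0$; otherwise sets $C_k^i=C_{k-1}^i$ and $\mathrm{flag}_k^i=1$; then transmits $C_k^i$ to its out-neighbors. Here $\mathrm{basis}(\mathcal{A})$ returns a matrix whose columns form a basis of the subspace $\mathcal{A}$, and returns $0$ if $\mathcal{A}=\{0\}$; the matrix $0$ is regarded as having $0$ columns. $\mathcal{R}(\cdot)$ denotes range space. *)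

theory Defs
  imports "Jordan_Normal_Form.Matrix"
begin

definition col_space :: "real mat \<Rightarrow> real vec set" where
  "col_space A = {mult_mat_vec A x | x. x \<in> carrier_vec (dim_col A)}"

definition null_space :: "real mat \<Rightarrow> real vec set" where
  "null_space A = {x \<in> carrier_vec (dim_col A). mult_mat_vec A x = 0\<^sub>v (dim_row A)}"

definition full_col_rank :: "real mat \<Rightarrow> bool" where
  "full_col_rank A \<longleftrightarrow> (\<forall>x \<in> carrier_vec (dim_col A). mult_mat_vec A x = 0\<^sub>v (dim_row A) \<longrightarrow> x = 0\<^sub>v (dim_col A))"

text \<open>The columns of B (an n-row matrix) form a basis of S.  A matrix with 0 columns
  (the "matrix 0 regarded as having 0 columns") is a basis of the trivial subspace.\<close>
definition is_basis_mat :: "nat \<Rightarrow> real mat \<Rightarrow> real vec set \<Rightarrow> bool" where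
  "is_basis_mat n B S \<longleftrightarrow> dim_row B = n \<and> col_space B = S \<and> full_col_rank B"

definition lin_subspace :: "nat \<Rightarrow> real vec set \<Rightarrow> bool" where
  "lin_subspace n S \<longleftrightarrow> S \<subseteq> carrier_vec n \<and> 0\<^sub>v n \<in> S \<and>
     (\<forall>x\<in>S. \<forall>y\<in>S. x + y \<in> S) \<and> (\<forall>c. \<forall>x\<in>S. c \<cdot>\<^sub>v x \<in> S)"

definition hcat :: "real mat \<Rightarrow> real mat \<Rightarrow> real mat" where
  "hcat A B = mat (dim_row A) (dim_col A + dim_col B)
     (\<lambda>(i,j). if j < dim_col A then A $$ (i,j) else B $$ (i, j - dim_col A))"

definition top_rows :: "nat \<Rightarrow> real mat \<Rightarrow> real mat" where
  "top_rows p Z = mat p (dim_col Z) (\<lambda>(i,j). Z $$ (i,j))"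

definition dict_mat :: "(nat \<Rightarrow> real vec \<Rightarrow> real) \<Rightarrow> nat \<Rightarrow> real mat \<Rightarrow> real mat" where
  "dict_mat d Nd X = mat (dim_row X) Nd (\<lambda>(r,c). d c (row X r))"

text \<open>ns is the (arbitrary but fixed) procedure returning a matrix whose columns form a
  basis of the null space of its argument. The first argument of ssd_aux is fuel;
  the number of columns of A strictly decreases at every continuing iteration, so
  fuel dim_col A + 1 is never exhausted when ns meets its specification.\<close>
fun ssd_aux :: "(real mat \<Rightarrow> real mat) \<Rightarrow> nat \<Rightarrow> real mat \<Rightarrow> real mat \<Rightarrow> real mat \<Rightarrow> real mat" where
  "ssd_aux ns 0 A B C = C"
| "ssd_aux ns (Suc f) A B C =
     (let Z = ns (hcat A B); p = dim_col A; r = dim_col Z in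
      if r = 0 then 0\<^sub>m (dim_row C) 0
      else if p \<le> r then C
      else (let ZA = top_rows p Z in ssd_aux ns f (A * ZA) (B * ZA) (C * ZA)))"

definition SSD :: "(real mat \<Rightarrow> real mat) \<Rightarrow> real mat \<Rightarrow> real mat \<Rightarrow> real mat" where
  "SSD ns A B = ssd_aux ns (dim_col A + 1) A B (1\<^sub>m (dim_col A))"

text \<open>bs: basis procedure on subspaces; ns: null-space basis procedure;
  DX i, DY i: local dictionary snapshots of agent i; E: edge set ((j,i) \<in> E means
  j is an in-neighbour of i); Nd: dictionary size.\<close>

definition in_nbrs :: "(nat \<times> nat) set \<Rightarrow> nat \<Rightarrow> nat set" where
  "in_nbrs E i = {j. (j, i) \<in> E}"

text \<open>D_k^i E_k^i computed from the previous matrices Cprev = C_(k-1).\<close>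
definition pssd_cand :: "(real vec set \<Rightarrow> real mat) \<Rightarrow> (real mat \<Rightarrow> real mat) \<Rightarrow>
    (nat \<Rightarrow> real mat) \<Rightarrow> (nat \<Rightarrow> real mat) \<Rightarrow> (nat \<times> nat) set \<Rightarrow>
    (nat \<Rightarrow> real mat) \<Rightarrow> nat \<Rightarrow> real mat" where
  "pssd_cand bs ns DX DY E Cprev i =
     (let D = bs (\<Inter>j \<in> insert i (in_nbrs E i). col_space (Cprev j));
          Ek = SSD ns (DX i * D) (DY i * D)
      in D * Ek)"

primrec pssd_C :: "(real vec set \<Rightarrow> real mat) \<Rightarrow> (real mat \<Rightarrow> real mat) \<Rightarrow>
    (nat \<Rightarrow> real mat) \<Rightarrow> (nat \<Rightarrow> real mat) \<Rightarrow> (nat \<times> nat) set \<Rightarrow> nat \<Rightarrow>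
    nat \<Rightarrow> nat \<Rightarrow> real mat" where
  "pssd_C bs ns DX DY E Nd 0 = (\<lambda>i. 1\<^sub>m Nd)"
| "pssd_C bs ns DX DY E Nd (Suc k) =
     (\<lambda>i. let Cp = pssd_C bs ns DX DY E Nd k; c = pssd_cand bs ns DX DY E Cp i in
          if dim_col c < dim_col (Cp i) then c else Cp i)"

text \<open>flag_k^i, encoded as a boolean (True = 1, False = 0).\<close>
definition pssd_flag :: "(real vec set \<Rightarrow> real mat) \<Rightarrow> (real mat \<Rightarrow> real mat) \<Rightarrow>
    (nat \<Rightarrow> real mat) \<Rightarrow> (nat \<Rightarrow> real mat) \<Rightarrow> (nat \<times> nat) set \<Rightarrow> nat \<Rightarrow>
    nat \<Rightarrow> nat \<Rightarrow> bool" where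
  "pssd_flag bs ns DX DY E Nd k i =
     (case k of 0 \<Rightarrow> False
      | Suc k' \<Rightarrow> (let Cp = pssd_C bs ns DX DY E Nd k' in
                    \<not> dim_col (pssd_cand bs ns DX DY E Cp i) < dim_col (Cp i)))"

end

theory Submission
  imports Defs
begin

text \<open>Agent i's candidate at an iteration depends only on the current matrices of i and its
  in-neighbours. If every flag is 1 at iteration l, no matrix changed at l, so at iteration l+1
  every agent recomputes exactly the candidate it rejected before and rejects it again; by
  induction nothing changes afterwards.\<close>

lemma pssd_flag_Suc:
  "pssd_flag bs ns DX DY E Nd (Suc k) i \<longleftrightarrow>
     \<not> dim_col (pssd_cand bs ns DX DY E (pssd_C bs ns DX DY E Nd k) i)
         < dim_col (pssd_C bs ns DX DY E Nd k i)"
  by (simp add: pssd_flag_def Let_def)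

lemma pssd_C_Suc_if_flag:
  assumes "pssd_flag bs ns DX DY E Nd (Suc k) i"
  shows "pssd_C bs ns DX DY E Nd (Suc k) i = pssd_C bs ns DX DY E Nd k i"
  using assms by (simp add: pssd_flag_Suc Let_def)

lemma pssd_cand_cong:
  assumes "\<forall>j \<in> insert i (in_nbrs E i). P j = Q j"
  shows "pssd_cand bs ns DX DY E P i = pssd_cand bs ns DX DY E Q i"
proof -
  have "(\<Inter>j \<in> insert i (in_nbrs E i). col_space (P j))
      = (\<Inter>j \<in> insert i (in_nbrs E i). col_space (Q j))"
    using assms by (intro INF_cong) auto
  then show ?thesis
    unfolding pssd_cand_def by simp
qed

lemma pssd_stable_from_all_flags:
  assumes E_sub: "E \<subseteq> V \<times> V"
    and flags: "\<forall>i \<in> V. pssd_flag bs ns DX DY E Nd (Suc L) i"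
    and k: "Suc L \<le> k"
  shows "\<forall>i \<in> V. pssd_C bs ns DX DY E Nd k i = pssd_C bs ns DX DY E Nd L i
                 \<and> pssd_flag bs ns DX DY E Nd k i"
  using k
proof (induction k rule: dec_induct)
  case base
  then show ?case
    using flags pssd_C_Suc_if_flag by blast
next
  case (step k)
  let ?C = "pssd_C bs ns DX DY E Nd"
  have flag_Suc: "pssd_flag bs ns DX DY E Nd (Suc k) i" if i: "i \<in> V" for i
  proof -
    have "in_nbrs E i \<subseteq> V"
      using E_sub unfolding in_nbrs_def by auto
    then have "\<forall>j \<in> insert i (in_nbrs E i). ?C k j = ?C L j"
      using step.IH i by blast
    then have "pssd_cand bs ns DX DY E (?C k) i = pssd_cand bs ns DX DY E (?C L) i"
      by (rule pssd_cand_cong)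
    moreover have "\<not> dim_col (pssd_cand bs ns DX DY E (?C L) i) < dim_col (?C L i)"
      using flags i by (simp add: pssd_flag_Suc)
    ultimately show ?thesis
      using step.IH i by (simp add: pssd_flag_Suc)
  qed
  show ?case
    using flag_Suc pssd_C_Suc_if_flag step.IH by simp
qed

theorem proposition4p3:
  fixes T :: "real vec \<Rightarrow> real vec" and MM :: "real vec set"
    and d :: "nat \<Rightarrow> real vec \<Rightarrow> real"
    and n N Nd M :: nat and X Y :: "real mat"
    and DX DY :: "nat \<Rightarrow> real mat" and DXs DYs :: "real mat"
    and E :: "(nat \<times> nat) set"
    and bs :: "real vec set \<Rightarrow> real mat" and ns :: "real mat \<Rightarrow> real mat"
    and l :: nat
  assumes MM_sub: "MM \<subseteq> carrier_vec n"
    and T_maps: "\<forall>x \<in> MM. T x \<in> MM"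
    and X_dim: "X \<in> carrier_mat N n" and Y_dim: "Y \<in> carrier_mat N n"
    and X_in: "\<forall>r < N. row X r \<in> MM"
    and snap: "\<forall>r < N. row Y r = T (row X r)"
    and rankX: "full_col_rank (dict_mat d Nd X)"
    and rankY: "full_col_rank (dict_mat d Nd Y)"
    and M_pos: "M \<ge> 1"
    and loc_dim: "\<forall>i \<in> {1..M}. DX i \<in> carrier_mat (dim_row (DX i)) Nd \<and>
                                  DY i \<in> carrier_mat (dim_row (DX i)) Nd"
    and loc_union: "(\<Union>i \<in> {1..M}. set (rows (hcat (DX i) (DY i))))
                     = set (rows (hcat (dict_mat d Nd X) (dict_mat d Nd Y)))"
    and sig_dim: "DXs \<in> carrier_mat (dim_row DXs) Nd \<and> DYs \<in> carrier_mat (dim_row DXs) Nd"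
    and sig_rank: "full_col_rank DXs" "full_col_rank DYs"
    and sig_sub: "\<forall>i \<in> {1..M}. set (rows (hcat DXs DYs)) \<subseteq> set (rows (hcat (DX i) (DY i)))"
    and E_sub: "E \<subseteq> {1..M} \<times> {1..M}"
    and bs_spec: "\<forall>S. lin_subspace Nd S \<longrightarrow> is_basis_mat Nd (bs S) S"
    and ns_spec: "\<forall>A. is_basis_mat (dim_col A) (ns A) (null_space A)"
    and l_pos: "l \<ge> 1"
  shows "(\<forall>i \<in> {1..M}. pssd_flag bs ns DX DY E Nd l i) \<longleftrightarrow>
         (\<forall>i \<in> {1..M}. \<forall>k \<ge> l.
            pssd_C bs ns DX DY E Nd k i = pssd_C bs ns DX DY E Nd (l - 1) i \<and>
            pssd_flag bs ns DX DY E Nd k i)"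
proof
  assume flags: "\<forall>i \<in> {1..M}. pssd_flag bs ns DX DY E Nd l i"
  obtain L where l: "l = Suc L"
    using l_pos by (cases l) auto
  show "\<forall>i \<in> {1..M}. \<forall>k \<ge> l.
          pssd_C bs ns DX DY E Nd k i = pssd_C bs ns DX DY E Nd (l - 1) i \<and>
          pssd_flag bs ns DX DY E Nd k i"
    using pssd_stable_from_all_flags[OF E_sub] flags unfolding l by simp
next
  assume "\<forall>i \<in> {1..M}. \<forall>k \<ge> l.
            pssd_C bs ns DX DY E Nd k i = pssd_C bs ns DX DY E Nd (l - 1) i \<and>
            pssd_flag bs ns DX DY E Nd k i"
  then show "\<forall>i \<in> {1..M}. pssd_flag bs ns DX DY E Nd l i"
    by blast
qed

end
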